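(* Let $G$ be a finite group. If $G$ has a subgroup isomorphic to the dihedral group $D_6$ of order $6$ or to the quaternion group $Q_8$ of order $8$, then $G$ is not strongly sequenceable.
   Context: Let $G$ have identity $e$ and let $S\subseteq G\setminus\{e\}$, $|S|=k$. For an ordering $(g_1,\dots,g_k)$ of the elements of $S$ let $h_0=e$, $h_i=g_1\cdots g_i$. The ordering is an $S$-sequencing if $h_0,\dots,h_k$ are pairwise distinct, and a rotational $S$-sequencing if $h_1,\dots,h_k$ are pairwise distinct and $h_k=e$. The group $G$ is strongly sequenceable if for every $S\subseteq G\setminus\{e\}$ there is an $S$-sequencing or a rotational $S$-sequencing (or both). *)

theory Defs
  imports "HOL-Algebra.Algebra"
begin

definition partial_prod :: "('a, 'b) monoid_scheme \<Rightarrow> 'a list \<Rightarrow> nat \<Rightarrow> 'a" where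
  "partial_prod G gs i = foldl (\<otimes>\<^bsub>G\<^esub>) \<one>\<^bsub>G\<^esub> (take i gs)"

definition S_sequencing :: "('a, 'b) monoid_scheme \<Rightarrow> 'a set \<Rightarrow> 'a list \<Rightarrow> bool" where
  "S_sequencing G S gs \<longleftrightarrow> distinct gs \<and> set gs = S \<and>
     inj_on (partial_prod G gs) {0..length gs}"

definition rotational_S_sequencing :: "('a, 'b) monoid_scheme \<Rightarrow> 'a set \<Rightarrow> 'a list \<Rightarrow> bool" where
  "rotational_S_sequencing G S gs \<longleftrightarrow> distinct gs \<and> set gs = S \<and>
     inj_on (partial_prod G gs) {1..length gs} \<and> partial_prod G gs (length gs) = \<one>\<^bsub>G\<^esub>"

definition strongly_sequenceable :: "('a, 'b) monoid_scheme \<Rightarrow> bool" where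
  "strongly_sequenceable G \<longleftrightarrow>
     (\<forall>S. S \<subseteq> carrier G - {\<one>\<^bsub>G\<^esub>} \<longrightarrow>
        (\<exists>gs. S_sequencing G S gs \<or> rotational_S_sequencing G S gs))"

text \<open>Dihedral group of order 6: elements r^i s^j encoded as (i,j), i in Z_3, j in Z_2,
  with s r = r^{-1} s.\<close>
definition D6 :: "(int \<times> int) monoid" where
  "D6 = \<lparr> carrier = {0..2} \<times> {0..1},
          monoid.mult = (\<lambda>(i,j) (k,l). ((i + (-1)^nat j * k) mod 3, (j + l) mod 2)),
          one = (0, 0) \<rparr>"

text \<open>Quaternion group of order 8: elements i^a j^b encoded as (a,b), a in Z_4, b in Z_2,
  with i^4 = 1, j^2 = i^2, j i = i^{-1} j.\<close>
definition Q8 :: "(int \<times> int) monoid" where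
  "Q8 = \<lparr> carrier = {0..3} \<times> {0..1},
          monoid.mult = (\<lambda>(a,b) (c,d). ((a + (-1)^nat b * c + 2 * b * d) mod 4, (b + d) mod 2)),
          one = (0, 0) \<rparr>"

end

theory Submission
  imports Defs "HOL-Combinatorics.Multiset_Permutations"
begin

text \<open>Strong sequenceability passes to subgroups, since a subset of a subgroup H is a subset
  of G and both kinds of sequencing only refer to the multiplication, and it is invariant
  under isomorphism, since an injective homomorphism maps partial products to partial
  products. So it suffices that D6 and Q8 themselves are not strongly sequenceable. For D6
  take S = D6 - {e}, for Q8 the six elements of order 4; an exhaustive check of the 5! resp.
  6! orderings of S shows that none is a sequencing or a rotational sequencing.\<close>

lemma S_sequencing_iff_distinct:
  "S_sequencing G S gs \<longleftrightarrow>
     distinct gs \<and> set gs = S \<and> distinct (map (partial_prod G gs) [0..<Suc (length gs)])"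
  by (simp add: S_sequencing_def distinct_map atLeastLessThanSuc_atLeastAtMost del: upt_Suc)

lemma rotational_S_sequencing_iff_distinct:
  "rotational_S_sequencing G S gs \<longleftrightarrow>
     distinct gs \<and> set gs = S \<and> distinct (map (partial_prod G gs) [1..<Suc (length gs)]) \<and>
     partial_prod G gs (length gs) = \<one>\<^bsub>G\<^esub>"
  by (simp add: rotational_S_sequencing_def distinct_map atLeastLessThanSuc_atLeastAtMost
      del: upt_Suc)

lemma not_strongly_sequenceableI:
  assumes "S \<subseteq> carrier G - {\<one>\<^bsub>G\<^esub>}"
    and "\<forall>gs\<in>permutations_of_set S. \<not> S_sequencing G S gs \<and> \<not> rotational_S_sequencing G S gs"
  shows "\<not> strongly_sequenceable G"
  using assms unfolding strongly_sequenceable_def permutations_of_set_def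
    S_sequencing_def rotational_S_sequencing_def
  by blast

lemma partial_prod_carrier_update: "partial_prod (G\<lparr>carrier := H\<rparr>) = partial_prod G"
  by (intro ext) (simp add: partial_prod_def)

lemma strongly_sequenceable_subgroup:
  assumes "subgroup H G" and "strongly_sequenceable G"
  shows "strongly_sequenceable (G\<lparr>carrier := H\<rparr>)"
proof -
  have "S_sequencing (G\<lparr>carrier := H\<rparr>) = S_sequencing G"
    and "rotational_S_sequencing (G\<lparr>carrier := H\<rparr>) = rotational_S_sequencing G"
    by (simp_all add: fun_eq_iff S_sequencing_def rotational_S_sequencing_def
        partial_prod_carrier_update)
  moreover have "H - {\<one>\<^bsub>G\<^esub>} \<subseteq> carrier G - {\<one>\<^bsub>G\<^esub>}"
    using subgroup.subset[OF assms(1)] by blast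
  ultimately show ?thesis
    using assms(2) unfolding strongly_sequenceable_def by auto
qed

lemma foldl_closed:
  assumes "monoid M" and "c \<in> carrier M" and "set xs \<subseteq> carrier M"
  shows "foldl (\<otimes>\<^bsub>M\<^esub>) c xs \<in> carrier M"
  using assms(2,3) by (induction xs arbitrary: c) (simp_all add: monoid.m_closed[OF assms(1)])

lemma foldl_map_hom:
  assumes "monoid M" and "h \<in> hom M K" and "c \<in> carrier M" and "set xs \<subseteq> carrier M"
  shows "foldl (\<otimes>\<^bsub>K\<^esub>) (h c) (map h xs) = h (foldl (\<otimes>\<^bsub>M\<^esub>) c xs)"
  using assms(3,4)
proof (induction xs arbitrary: c)
  case Nil
  then show ?case by simp
next
  case (Cons x xs)
  then have "c \<otimes>\<^bsub>M\<^esub> x \<in> carrier M"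
    by (simp add: monoid.m_closed[OF assms(1)])
  then have "foldl (\<otimes>\<^bsub>K\<^esub>) (h (c \<otimes>\<^bsub>M\<^esub> x)) (map h xs) = h (foldl (\<otimes>\<^bsub>M\<^esub>) (c \<otimes>\<^bsub>M\<^esub> x) xs)"
    using Cons.prems by (intro Cons.IH) auto
  moreover have "h (c \<otimes>\<^bsub>M\<^esub> x) = h c \<otimes>\<^bsub>K\<^esub> h x"
    using Cons.prems by (simp add: hom_mult[OF assms(2)])
  ultimately show ?case by simp
qed

lemma partial_prod_closed:
  assumes "monoid M" and "set gs \<subseteq> carrier M"
  shows "partial_prod M gs i \<in> carrier M"
  unfolding partial_prod_def using assms(2) set_take_subset[of i gs]
  by (intro foldl_closed[OF assms(1) monoid.one_closed[OF assms(1)]]) blast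

lemma partial_prod_map_hom:
  assumes "monoid M" and "h \<in> hom M K" and "h \<one>\<^bsub>M\<^esub> = \<one>\<^bsub>K\<^esub>" and "set gs \<subseteq> carrier M"
  shows "partial_prod K (map h gs) i = h (partial_prod M gs i)"
  using foldl_map_hom[OF assms(1,2) monoid.one_closed[OF assms(1)], of "take i gs"]
    assms(3,4) set_take_subset[of i gs]
  unfolding partial_prod_def take_map by simp

lemma inj_on_partial_prod_map_hom:
  assumes "monoid M" and "h \<in> hom M K" and "h \<one>\<^bsub>M\<^esub> = \<one>\<^bsub>K\<^esub>" and "inj_on h (carrier M)"
    and "set gs \<subseteq> carrier M" and "inj_on (partial_prod M gs) A"
  shows "inj_on (partial_prod K (map h gs)) A"
proof -
  have "partial_prod M gs ` A \<subseteq> carrier M"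
    using partial_prod_closed[OF assms(1,5)] by blast
  then have "inj_on (h \<circ> partial_prod M gs) A"
    using assms(4,6) by (blast intro: comp_inj_on inj_on_subset)
  moreover have "partial_prod K (map h gs) = h \<circ> partial_prod M gs"
    using partial_prod_map_hom[OF assms(1-3,5)] by (simp add: fun_eq_iff)
  ultimately show ?thesis by simp
qed

lemma S_sequencing_map_hom:
  assumes "monoid M" and "h \<in> hom M K" and "h \<one>\<^bsub>M\<^esub> = \<one>\<^bsub>K\<^esub>" and "inj_on h (carrier M)"
    and "S \<subseteq> carrier M" and "S_sequencing M S gs"
  shows "S_sequencing K (h ` S) (map h gs)"
proof -
  have gs: "distinct gs" "set gs = S" "inj_on (partial_prod M gs) {0..length gs}"
    using assms(6) unfolding S_sequencing_def by auto
  moreover have "inj_on h (set gs)"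
    using assms(4,5) gs(2) inj_on_subset by blast
  ultimately show ?thesis
    using inj_on_partial_prod_map_hom[OF assms(1-4)] assms(5)
    unfolding S_sequencing_def by (simp add: distinct_map)
qed

lemma rotational_S_sequencing_map_hom:
  assumes "monoid M" and "h \<in> hom M K" and "h \<one>\<^bsub>M\<^esub> = \<one>\<^bsub>K\<^esub>" and "inj_on h (carrier M)"
    and "S \<subseteq> carrier M" and "rotational_S_sequencing M S gs"
  shows "rotational_S_sequencing K (h ` S) (map h gs)"
proof -
  have gs: "distinct gs" "set gs = S" "inj_on (partial_prod M gs) {1..length gs}"
    "partial_prod M gs (length gs) = \<one>\<^bsub>M\<^esub>"
    using assms(6) unfolding rotational_S_sequencing_def by auto
  moreover have "inj_on h (set gs)"
    using assms(4,5) gs(2) inj_on_subset by blast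
  ultimately show ?thesis
    using inj_on_partial_prod_map_hom[OF assms(1-4)] partial_prod_map_hom[OF assms(1-3)] assms(3,5)
    unfolding rotational_S_sequencing_def by (simp add: distinct_map)
qed

lemma strongly_sequenceable_iso:
  assumes "group M" and "group K" and "M \<cong> K" and "strongly_sequenceable M"
  shows "strongly_sequenceable K"
  unfolding strongly_sequenceable_def
proof (intro allI impI)
  fix S assume S: "S \<subseteq> carrier K - {\<one>\<^bsub>K\<^esub>}"
  obtain h where "h \<in> iso M K"
    using assms(3) by (auto simp: is_iso_def)
  then have hom: "h \<in> hom M K" and bij: "bij_betw h (carrier M) (carrier K)"
    by (auto simp: iso_def)
  have one: "h \<one>\<^bsub>M\<^esub> = \<one>\<^bsub>K\<^esub>"
    using hom assms(1,2) by (rule hom_one)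
  have surj: "h ` carrier M = carrier K"
    using bij by (simp add: bij_betw_def)
  define S' where "S' = inv_into (carrier M) h ` S"
  have image: "h ` S' = S"
    unfolding S'_def using image_inv_into_cancel[OF surj] S by blast
  have S': "S' \<subseteq> carrier M - {\<one>\<^bsub>M\<^esub>}"
  proof
    fix x assume "x \<in> S'"
    then obtain y where y: "y \<in> S" and x: "x = inv_into (carrier M) h y"
      unfolding S'_def by blast
    have "y \<in> h ` carrier M"
      using S y surj by blast
    then have "x \<in> carrier M" and "h x = y"
      unfolding x by (rule inv_into_into, rule f_inv_into_f)
    then show "x \<in> carrier M - {\<one>\<^bsub>M\<^esub>}"
      using S y one by auto
  qed
  then obtain gs where gs: "S_sequencing M S' gs \<or> rotational_S_sequencing M S' gs"
    using assms(4) unfolding strongly_sequenceable_def by blast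
  have M: "monoid M" and inj: "inj_on h (carrier M)" and S'_carrier: "S' \<subseteq> carrier M"
    using assms(1) bij S' by (auto simp: group.is_monoid bij_betw_def)
  have "S_sequencing K S (map h gs) \<or> rotational_S_sequencing K S (map h gs)"
    using gs S_sequencing_map_hom[OF M hom one inj S'_carrier]
      rotational_S_sequencing_map_hom[OF M hom one inj S'_carrier]
    unfolding image by blast
  then show "\<exists>gs. S_sequencing K S gs \<or> rotational_S_sequencing K S gs" by blast
qed

lemma groupI_bounded:
  assumes "(\<forall>x\<in>carrier G. \<forall>y\<in>carrier G. x \<otimes>\<^bsub>G\<^esub> y \<in> carrier G) \<and> \<one>\<^bsub>G\<^esub> \<in> carrier G \<and>
    (\<forall>x\<in>carrier G. \<forall>y\<in>carrier G. \<forall>z\<in>carrier G.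
       x \<otimes>\<^bsub>G\<^esub> y \<otimes>\<^bsub>G\<^esub> z = x \<otimes>\<^bsub>G\<^esub> (y \<otimes>\<^bsub>G\<^esub> z)) \<and>
    (\<forall>x\<in>carrier G. \<one>\<^bsub>G\<^esub> \<otimes>\<^bsub>G\<^esub> x = x \<and> (\<exists>y\<in>carrier G. y \<otimes>\<^bsub>G\<^esub> x = \<one>\<^bsub>G\<^esub>))"
  shows "group G"
  using assms by (intro groupI) auto

lemma group_D6: "group D6"
  by (rule groupI_bounded) (simp only: D6_def; code_simp)

lemma group_Q8: "group Q8"
  by (rule groupI_bounded) (simp only: Q8_def; code_simp)

lemma D6_not_strongly_sequenceable: "\<not> strongly_sequenceable D6"
  by (rule not_strongly_sequenceableI[where S = "set [(0, 1), (1, 0), (1, 1), (2, 0), (2, 1)]"];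
      simp only: S_sequencing_iff_distinct rotational_S_sequencing_iff_distinct
        D6_def partial_prod_def; code_simp)

text \<open>The pair (2, 0) encodes the central involution i^2 of Q8; the remaining six
  non-identity elements are those of order 4.\<close>

lemma Q8_not_strongly_sequenceable: "\<not> strongly_sequenceable Q8"
  by (rule not_strongly_sequenceableI[where S = "set [(0, 1), (1, 0), (1, 1), (2, 1), (3, 0), (3, 1)]"];
      simp only: S_sequencing_iff_distinct rotational_S_sequencing_iff_distinct
        Q8_def partial_prod_def; code_simp)

theorem theorem6p1:
  fixes G :: "('a, 'b) monoid_scheme"
  assumes "group G" and "finite (carrier G)"
    and "\<exists>H. subgroup H G \<and> (G\<lparr>carrier := H\<rparr> \<cong> D6 \<or> G\<lparr>carrier := H\<rparr> \<cong> Q8)"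
  shows "\<not> strongly_sequenceable G"
proof
  assume G: "strongly_sequenceable G"
  obtain H where H: "subgroup H G" and iso: "G\<lparr>carrier := H\<rparr> \<cong> D6 \<or> G\<lparr>carrier := H\<rparr> \<cong> Q8"
    using assms(3) by blast
  have "group (G\<lparr>carrier := H\<rparr>)"
    using H assms(1) by (rule subgroup.subgroup_is_group)
  moreover have "strongly_sequenceable (G\<lparr>carrier := H\<rparr>)"
    using H G by (rule strongly_sequenceable_subgroup)
  ultimately have "strongly_sequenceable D6 \<or> strongly_sequenceable Q8"
    using iso strongly_sequenceable_iso group_D6 group_Q8 by blast
  then show False
    using D6_not_strongly_sequenceable Q8_not_strongly_sequenceable by blast
qed

end
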